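(* Let $W$ be a channel from finite $\mathcal X$ to finite $\mathcal Y$ and $W'$ a channel from finite $\mathcal X'$ to finite $\mathcal Y'$, and let $W\times W'$ be the product channel from $\mathcal X\times\mathcal X'$ to $\mathcal Y\times\mathcal Y'$, $(W\times W')_{x,x'}(y,y')=W_x(y)W'_{x'}(y')$. Then \[ V^+_{W\times W'}=V^+_W+V^+_{W'},\qquad V^-_{W\times W'}=V^-_W+V^-_{W'}. \]
   Context: For a channel $W$ (a family of distributions $W_x$ on the output set) and an input distribution $P$: $W_P=\sum_xP(x)W_x$, $D$ is relative entropy (natural log), $I(P,W)=\sum_xP(x)D(W_x\|W_P)$, $C_W=\max_PI(P,W)$, $V_{P,W}=\sum_xP(x)\sum_yW_x(y)\big(\log\frac{W_x(y)}{W_P(y)}-D(W_x\|W_P)\big)^2$, $\mathcal V_W=\{P:I(P,W)=C_W\}$, $V^+_W=\max_{P\in\mathcal V_W}V_{P,W}$, $V^-_W=\min_{P\in\mathcal V_W}V_{P,W}$. *)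

theory Defs
  imports "HOL-Analysis.Analysis"
begin

definition is_distr :: "('a::finite \<Rightarrow> real) \<Rightarrow> bool" where
  "is_distr P \<longleftrightarrow> (\<forall>a. 0 \<le> P a) \<and> (\<Sum>a\<in>UNIV. P a) = 1"

definition is_channel :: "('x::finite \<Rightarrow> 'y::finite \<Rightarrow> real) \<Rightarrow> bool" where
  "is_channel W \<longleftrightarrow> (\<forall>x. is_distr (W x))"

definition out_distr :: "('x::finite \<Rightarrow> 'y::finite \<Rightarrow> real) \<Rightarrow> ('x \<Rightarrow> real) \<Rightarrow> 'y \<Rightarrow> real" where
  "out_distr W P y = (\<Sum>x\<in>UNIV. P x * W x y)"

text \<open>Relative entropy (natural log), with the convention 0 log(0/q) = 0.
  It is only used with P x > 0, where W_x is absolutely continuous w.r.t. W_P.\<close>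
definition rel_ent :: "('y::finite \<Rightarrow> real) \<Rightarrow> ('y \<Rightarrow> real) \<Rightarrow> real" where
  "rel_ent p q = (\<Sum>y\<in>UNIV. if p y = 0 then 0 else p y * ln (p y / q y))"

definition mutual_info :: "('x::finite \<Rightarrow> real) \<Rightarrow> ('x \<Rightarrow> 'y::finite \<Rightarrow> real) \<Rightarrow> real" where
  "mutual_info P W = (\<Sum>x\<in>UNIV. if P x = 0 then 0 else P x * rel_ent (W x) (out_distr W P))"

definition dispersion :: "('x::finite \<Rightarrow> real) \<Rightarrow> ('x \<Rightarrow> 'y::finite \<Rightarrow> real) \<Rightarrow> real" where
  "dispersion P W = (\<Sum>x\<in>UNIV. if P x = 0 then 0 else P x *
      (\<Sum>y\<in>UNIV. if W x y = 0 then 0 else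
         W x y * (ln (W x y / out_distr W P y) - rel_ent (W x) (out_distr W P))\<^sup>2))"

text \<open>Capacity C_W = max_P I(P,W) (the maximum exists; written as a supremum).\<close>
definition capacity :: "('x::finite \<Rightarrow> 'y::finite \<Rightarrow> real) \<Rightarrow> real" where
  "capacity W = (SUP P \<in> {P. is_distr P}. mutual_info P W)"

definition optimal_inputs :: "('x::finite \<Rightarrow> 'y::finite \<Rightarrow> real) \<Rightarrow> ('x \<Rightarrow> real) set" where
  "optimal_inputs W = {P. is_distr P \<and> mutual_info P W = capacity W}"

definition Vplus :: "('x::finite \<Rightarrow> 'y::finite \<Rightarrow> real) \<Rightarrow> real" where
  "Vplus W = (SUP P \<in> optimal_inputs W. dispersion P W)"

definition Vminus :: "('x::finite \<Rightarrow> 'y::finite \<Rightarrow> real) \<Rightarrow> real" where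
  "Vminus W = (INF P \<in> optimal_inputs W. dispersion P W)"

definition prod_channel ::
  "('x::finite \<Rightarrow> 'y::finite \<Rightarrow> real) \<Rightarrow> ('x'::finite \<Rightarrow> 'y'::finite \<Rightarrow> real)
     \<Rightarrow> ('x \<times> 'x' \<Rightarrow> 'y \<times> 'y' \<Rightarrow> real)" where
  "prod_channel W W' = (\<lambda>(x, x') (y, y'). W x y * W' x' y')"

end

theory Submission
  imports Defs "HOL-Real_Asymp.Real_Asymp"
begin

(* Write H for Shannon entropy. Mutual information is I(P,W) = H(W_P) - sum_x P(x) H(W_x).
   For a joint input R of the product channel W x W' with marginals R_1, R_2 and output Q,
   the marginals of Q are the outputs of R_1 and R_2, and every row of W x W' is a product
   distribution, whose entropy is additive. Hence
       I(R, W x W') = I(R_1, W) + I(R_2, W') - (H(Q_1) + H(Q_2) - H(Q)),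
   and subadditivity of entropy (Gibbs' inequality) shows that the capacity is additive and
   that R is capacity-achieving iff R_1, R_2 are and Q = Q_1 x Q_2. In that case the
   information density of W x W' is the sum of those of W and W' on the support of each row,
   so variances (and hence dispersions) add. Thus the set of dispersions of optimal inputs of
   W x W' is the Minkowski sum of those of W and W'; these sets are nonempty (the capacity is
   attained, by compactness) and bounded, so their suprema and infima add. *)

lemma distr_nonneg: "is_distr P \<Longrightarrow> 0 \<le> P a"
  by (simp add: is_distr_def)

lemma distr_sum: "is_distr P \<Longrightarrow> (\<Sum>a\<in>UNIV. P a) = 1"
  by (simp add: is_distr_def)

lemma distr_le_1:
  assumes "is_distr P" shows "P a \<le> 1"
proof -
  have "P a \<le> (\<Sum>a\<in>UNIV. P a)"
    by (rule member_le_sum) (auto simp: distr_nonneg[OF assms])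
  thus ?thesis using distr_sum[OF assms] by simp
qed

lemma channel_distr: "is_channel W \<Longrightarrow> is_distr (W x)"
  by (simp add: is_channel_def)

lemma channel_nonneg: "is_channel W \<Longrightarrow> 0 \<le> W x y"
  by (simp add: is_channel_def is_distr_def)

lemma channel_sum: "is_channel W \<Longrightarrow> (\<Sum>y\<in>UNIV. W x y) = 1"
  by (simp add: is_channel_def is_distr_def)

text \<open>Every joint probability of an input and an output bounds the output probability;
  in particular the support of W_x lies in that of W_P whenever P x > 0.\<close>
lemma out_distr_ge:
  assumes "is_distr P" "is_channel W" shows "P x * W x y \<le> out_distr W P y"
  unfolding out_distr_def
  by (rule member_le_sum[where f="\<lambda>x. P x * W x y"])
     (auto intro!: mult_nonneg_nonneg distr_nonneg[OF assms(1)] channel_nonneg[OF assms(2)])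

lemma out_distr_pos:
  assumes "is_distr P" "is_channel W" "P x \<noteq> 0" "W x y \<noteq> 0" shows "0 < out_distr W P y"
proof -
  have "0 < P x * W x y"
    using assms distr_nonneg[OF assms(1), of x] channel_nonneg[OF assms(2), of x y] by simp
  thus ?thesis using out_distr_ge[OF assms(1,2)] by (meson less_le_trans)
qed

lemma out_distr_distr:
  assumes "is_distr P" "is_channel W" shows "is_distr (out_distr W P)"
proof -
  have "(\<Sum>y\<in>UNIV. out_distr W P y) = (\<Sum>x\<in>UNIV. P x * (\<Sum>y\<in>UNIV. W x y))"
    unfolding out_distr_def by (subst sum.swap) (simp add: sum_distrib_left mult.assoc)
  also have "\<dots> = 1" using channel_sum[OF assms(2)] distr_sum[OF assms(1)] by simp
  finally show ?thesis unfolding is_distr_def out_distr_def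
    using distr_nonneg[OF assms(1)] channel_nonneg[OF assms(2)] by (auto intro!: sum_nonneg)
qed

text \<open>The guards in the definitions only exclude terms that vanish anyway.\<close>
lemma rel_ent_eq: "rel_ent p q = (\<Sum>y\<in>UNIV. p y * ln (p y / q y))"
  unfolding rel_ent_def by (auto intro!: sum.cong)

lemma mutual_info_eq: "mutual_info P W = (\<Sum>x\<in>UNIV. P x * rel_ent (W x) (out_distr W P))"
  unfolding mutual_info_def by (auto intro!: sum.cong)

section \<open>Entropy and Gibbs' inequality\<close>

definition xlnx :: "real \<Rightarrow> real" where
  "xlnx t = t * ln t"

definition entropy :: "('a::finite \<Rightarrow> real) \<Rightarrow> real" where
  "entropy p = - (\<Sum>y\<in>UNIV. xlnx (p y))"

lemma xlnx_mult: "xlnx (a * b) = b * xlnx a + a * xlnx b"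
  by (auto simp: xlnx_def ln_mult algebra_simps)

lemma isCont_xlnx: "isCont xlnx t"
proof (cases "t = 0")
  case False thus ?thesis unfolding xlnx_def by (intro continuous_intros) auto
next
  case True
  have right: "((\<lambda>t::real. t * ln t) \<longlongrightarrow> 0) (at_right 0)" by real_asymp
  have "((\<lambda>t::real. - (t * ln t)) \<longlongrightarrow> - 0) (at_right 0)" by (intro tendsto_minus right)
  hence left: "((\<lambda>t::real. t * ln t) \<longlongrightarrow> 0) (at_left 0)"
    unfolding filterlim_at_left_to_right by (simp add: ln_minus)
  have "((\<lambda>t::real. t * ln t) \<longlongrightarrow> 0) (at 0)" using left right by (simp add: filterlim_at_split)
  thus ?thesis using True unfolding isCont_def xlnx_def by simp
qed

lemma continuous_on_xlnx [continuous_intros]: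
  "continuous_on A f \<Longrightarrow> continuous_on A (\<lambda>v. xlnx (f v))"
  by (rule continuous_on_compose2[of UNIV xlnx])
     (auto intro!: continuous_at_imp_continuous_on isCont_xlnx)

lemma mutual_info_entropy:
  assumes "is_distr P" "is_channel W"
  shows "mutual_info P W = entropy (out_distr W P) - (\<Sum>x\<in>UNIV. P x * entropy (W x))"
proof -
  let ?Q = "out_distr W P"
  have summand: "P x * (W x y * ln (W x y / ?Q y)) = P x * xlnx (W x y) - P x * W x y * ln (?Q y)"
    for x y
  proof (cases "P x = 0 \<or> W x y = 0")
    case True thus ?thesis by (auto simp: xlnx_def)
  next
    case False
    hence "?Q y \<noteq> 0" using out_distr_pos[OF assms] by fastforce
    thus ?thesis using False by (simp add: ln_div xlnx_def algebra_simps)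
  qed
  have "mutual_info P W = (\<Sum>x\<in>UNIV. \<Sum>y\<in>UNIV. P x * xlnx (W x y) - P x * W x y * ln (?Q y))"
    unfolding mutual_info_eq rel_ent_eq by (simp add: sum_distrib_left summand)
  also have "\<dots> = (\<Sum>x\<in>UNIV. P x * (\<Sum>y\<in>UNIV. xlnx (W x y)))
                  - (\<Sum>y\<in>UNIV. \<Sum>x\<in>UNIV. P x * W x y * ln (?Q y))"
    by (simp add: sum_subtractf sum_distrib_left) (subst sum.swap, rule refl)
  also have "(\<Sum>y\<in>UNIV. \<Sum>x\<in>UNIV. P x * W x y * ln (?Q y)) = (\<Sum>y\<in>UNIV. xlnx (?Q y))"
    unfolding xlnx_def out_distr_def by (simp add: sum_distrib_right)
  finally show ?thesis by (simp add: entropy_def sum_negf)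
qed

text \<open>Pointwise form of Gibbs' inequality: q ln q - q ln r - q + r \<ge> 0, with equality only
  for q = r (a consequence of ln t \<le> t - 1).\<close>
lemma gibbs_pointwise:
  fixes q r :: real
  assumes "0 \<le> q" "0 \<le> r" "r = 0 \<Longrightarrow> q = 0"
  shows "0 \<le> xlnx q - q * ln r - q + r" and "xlnx q - q * ln r - q + r = 0 \<Longrightarrow> q = r"
proof -
  have "0 \<le> xlnx q - q * ln r - q + r \<and> (xlnx q - q * ln r - q + r = 0 \<longrightarrow> q = r)"
  proof (cases "q = 0")
    case True thus ?thesis using assms by (simp add: xlnx_def)
  next
    case False
    hence "0 < q" "0 < r" using assms by force+
    define t where "t = r / q"
    have "0 < t" using \<open>0 < q\<close> \<open>0 < r\<close> by (simp add: t_def)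
    have gap: "xlnx q - q * ln r - q + r = q * (t - 1 - ln t)"
      using \<open>0 < q\<close> \<open>0 < r\<close> by (simp add: t_def xlnx_def ln_divide_pos field_simps)
    have "0 \<le> t - 1 - ln t" using ln_le_minus_one[OF \<open>0 < t\<close>] by simp
    moreover have "q = r" if "q * (t - 1 - ln t) = 0"
    proof -
      have "ln t = t - 1" using that \<open>0 < q\<close> by simp
      hence "t = 1" using ln_eq_minus_one \<open>0 < t\<close> by blast
      thus "q = r" using \<open>0 < q\<close> by (simp add: t_def)
    qed
    ultimately show ?thesis using gap \<open>0 < q\<close> by simp
  qed
  thus "0 \<le> xlnx q - q * ln r - q + r" and "xlnx q - q * ln r - q + r = 0 \<Longrightarrow> q = r"
    by auto
qed

lemma gibbs:
  fixes q r :: "'a::finite \<Rightarrow> real"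
  assumes "is_distr q" "is_distr r" "\<And>z. r z = 0 \<Longrightarrow> q z = 0"
  shows "(\<Sum>z\<in>UNIV. q z * ln (r z)) \<le> - entropy q"
    and "(\<Sum>z\<in>UNIV. q z * ln (r z)) = - entropy q \<Longrightarrow> q = r"
proof -
  define g where "g z = xlnx (q z) - q z * ln (r z) - q z + r z" for z
  have g_nonneg: "0 \<le> g z" for z
    unfolding g_def by (rule gibbs_pointwise(1)) (use assms distr_nonneg in auto)
  have sum_g: "(\<Sum>z\<in>UNIV. g z) = - entropy q - (\<Sum>z\<in>UNIV. q z * ln (r z))"
    unfolding g_def entropy_def using distr_sum[OF assms(1)] distr_sum[OF assms(2)]
    by (simp add: sum.distrib sum_subtractf)
  have "0 \<le> (\<Sum>z\<in>UNIV. g z)" by (rule sum_nonneg) (use g_nonneg in auto)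
  thus "(\<Sum>z\<in>UNIV. q z * ln (r z)) \<le> - entropy q" using sum_g by simp
  assume "(\<Sum>z\<in>UNIV. q z * ln (r z)) = - entropy q"
  hence "\<forall>z\<in>UNIV. g z = 0"
    using sum_g sum_nonneg_eq_0_iff[of UNIV g] g_nonneg by auto
  thus "q = r" unfolding g_def
    using gibbs_pointwise(2) assms distr_nonneg by (metis UNIV_I ext)
qed

section \<open>The capacity is attained\<close>

text \<open>Mutual information is a continuous function of the input distribution on the compact
  probability simplex, so it attains its maximum.\<close>
lemma capacity_attained:
  fixes W :: "'x::finite \<Rightarrow> 'y::finite \<Rightarrow> real"
  assumes "is_channel W"
  shows "\<exists>P. is_distr P \<and> (\<forall>P'. is_distr P' \<longrightarrow> mutual_info P' W \<le> mutual_info P W)"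
proof -
  define S where "S = {v::real^'x. (\<forall>x. 0 \<le> v$x) \<and> (\<Sum>x\<in>UNIV. v$x) = 1}"
  define g where "g v = - (\<Sum>y\<in>UNIV. xlnx (\<Sum>x\<in>UNIV. v$x * W x y))
                        - (\<Sum>x\<in>UNIV. v$x * entropy (W x))" for v :: "real^'x"
  have S_distr: "v \<in> S \<longleftrightarrow> is_distr (\<lambda>x. v$x)" for v by (simp add: S_def is_distr_def)
  have "S \<subseteq> cbox 0 (\<chi> i. 1)"
    using distr_le_1 distr_nonneg by (fastforce simp: S_distr mem_box_cart)
  moreover have "closed S" unfolding S_def
    by (intro closed_Collect_conj closed_Collect_all closed_Collect_le closed_Collect_eq
        continuous_intros)
  ultimately have "compact S"
    using compact_Int_closed[OF compact_cbox] by (metis inf.absorb_iff2)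
  moreover have "(\<chi> x. 1 / real CARD('x)) \<in> S" unfolding S_def by auto
  moreover have "continuous_on S g" unfolding g_def by (intro continuous_intros)
  ultimately obtain v where v: "v \<in> S" "\<And>u. u \<in> S \<Longrightarrow> g u \<le> g v"
    using continuous_attains_sup by (metis empty_iff)
  have g_mi: "g u = mutual_info (\<lambda>x. u$x) W" if "u \<in> S" for u
    using that unfolding g_def S_distr
    by (simp add: mutual_info_entropy[OF _ assms] entropy_def out_distr_def)
  show ?thesis
  proof (intro exI conjI allI impI)
    show "is_distr (\<lambda>x. v$x)" using v(1) S_distr by blast
    fix P' :: "'x \<Rightarrow> real" assume "is_distr P'"
    hence "(\<chi> x. P' x) \<in> S" by (simp add: S_distr)
    hence "g (\<chi> x. P' x) \<le> g v" by (rule v(2))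
    thus "mutual_info P' W \<le> mutual_info (\<lambda>x. v$x) W"
      using g_mi[OF \<open>(\<chi> x. P' x) \<in> S\<close>] g_mi[OF v(1)] by simp
  qed
qed

lemma capacity_max:
  fixes W :: "'x::finite \<Rightarrow> 'y::finite \<Rightarrow> real"
  assumes "is_channel W"
  shows capacity_achieved: "optimal_inputs W \<noteq> {}"
    and mutual_info_le_capacity: "is_distr P \<Longrightarrow> mutual_info P W \<le> capacity W"
proof -
  obtain P0 where P0: "is_distr P0" "\<And>P'. is_distr P' \<Longrightarrow> mutual_info P' W \<le> mutual_info P0 W"
    using capacity_attained[OF assms] by blast
  have "capacity W = mutual_info P0 W"
    unfolding capacity_def using P0 by (intro cSup_eq_maximum) auto
  thus "optimal_inputs W \<noteq> {}" and "is_distr P \<Longrightarrow> mutual_info P W \<le> capacity W"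
    using P0 by (auto simp: optimal_inputs_def)
qed

definition marg1 :: "('a::finite \<times> 'b::finite \<Rightarrow> real) \<Rightarrow> 'a \<Rightarrow> real" where
  "marg1 R a = (\<Sum>b\<in>UNIV. R (a, b))"

definition marg2 :: "('a::finite \<times> 'b::finite \<Rightarrow> real) \<Rightarrow> 'b \<Rightarrow> real" where
  "marg2 R b = (\<Sum>a\<in>UNIV. R (a, b))"

definition pprod :: "('a \<Rightarrow> real) \<Rightarrow> ('b \<Rightarrow> real) \<Rightarrow> 'a \<times> 'b \<Rightarrow> real" where
  "pprod p q z = p (fst z) * q (snd z)"

lemma sum_UNIV_prod:
  "(\<Sum>z\<in>(UNIV::('a::finite \<times> 'b::finite) set). g z) = (\<Sum>a\<in>UNIV. \<Sum>b\<in>UNIV. g (a, b))"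
  by (metis UNIV_Times_UNIV sum.cartesian_product')

lemma marg1_distr: "is_distr R \<Longrightarrow> is_distr (marg1 R)"
  unfolding is_distr_def marg1_def by (auto intro!: sum_nonneg simp: sum_UNIV_prod[symmetric])

lemma marg2_distr: "is_distr R \<Longrightarrow> is_distr (marg2 R)"
  unfolding is_distr_def marg2_def
  by (auto intro!: sum_nonneg simp: sum_UNIV_prod[symmetric] sum.swap[of _ UNIV UNIV])

lemma pprod_distr: "is_distr p \<Longrightarrow> is_distr q \<Longrightarrow> is_distr (pprod p q)"
  unfolding is_distr_def pprod_def
  by (auto simp: sum_UNIV_prod sum_distrib_left[symmetric] sum_distrib_right[symmetric])

lemma marg1_pprod: "is_distr q \<Longrightarrow> marg1 (pprod p q) = p"
  by (auto simp: marg1_def pprod_def sum_distrib_left[symmetric] distr_sum)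

lemma marg2_pprod: "is_distr p \<Longrightarrow> marg2 (pprod p q) = q"
  by (auto simp: marg2_def pprod_def sum_distrib_right[symmetric] distr_sum)

lemma le_marg:
  assumes "is_distr R" shows "R (a, b) \<le> marg1 R a" and "R (a, b) \<le> marg2 R b"
  unfolding marg1_def marg2_def
  by (rule member_le_sum[where f="\<lambda>b. R (a, b)"], auto intro: distr_nonneg[OF assms])
     (rule member_le_sum[where f="\<lambda>a. R (a, b)"], auto intro: distr_nonneg[OF assms])

lemma sum_split_marginals:
  "(\<Sum>z\<in>UNIV. R z * (f (fst z) + g (snd z)))
     = (\<Sum>a\<in>UNIV. marg1 R a * f a) + (\<Sum>b\<in>UNIV. marg2 R b * g b)"
proof -
  have "(\<Sum>z\<in>UNIV. R z * (f (fst z) + g (snd z)))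
      = (\<Sum>a\<in>UNIV. \<Sum>b\<in>UNIV. R (a, b) * f a) + (\<Sum>a\<in>UNIV. \<Sum>b\<in>UNIV. R (a, b) * g b)"
    by (simp add: sum_UNIV_prod algebra_simps sum.distrib)
  thus ?thesis
    unfolding marg1_def marg2_def by (subst (asm) (2) sum.swap) (simp add: sum_distrib_right)
qed

lemma entropy_pprod:
  assumes "is_distr p" "is_distr q"
  shows "entropy (pprod p q) = entropy p + entropy q"
  using distr_sum[OF assms(1)] distr_sum[OF assms(2)]
  by (simp add: entropy_def pprod_def sum_UNIV_prod xlnx_mult sum.distrib
      sum_distrib_left[symmetric] sum_distrib_right[symmetric])

text \<open>\<dots> and subadditive in general, with equality only for the product of the marginals.
  This is Gibbs' inequality relative to the product of the marginals.\<close>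
lemma entropy_subadditive:
  assumes J: "is_distr J"
  shows "entropy J \<le> entropy (marg1 J) + entropy (marg2 J)"
    and "entropy J = entropy (marg1 J) + entropy (marg2 J) \<Longrightarrow> J = pprod (marg1 J) (marg2 J)"
proof -
  let ?T = "pprod (marg1 J) (marg2 J)"
  have T: "is_distr ?T" by (intro pprod_distr marg1_distr marg2_distr J)
  have abs_cont: "J z = 0" if "?T z = 0" for z
    using that le_marg[OF J, of "fst z" "snd z"] distr_nonneg[OF J, of z]
    by (auto simp: pprod_def)
  have split_log: "J z * ln (?T z) = J z * (ln (marg1 J (fst z)) + ln (marg2 J (snd z)))" for z
    using abs_cont[of z] by (auto simp: pprod_def ln_mult)
  have cross: "(\<Sum>z\<in>UNIV. J z * ln (?T z)) = - entropy (marg1 J) - entropy (marg2 J)"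
    using sum_split_marginals[of J "\<lambda>a. ln (marg1 J a)" "\<lambda>b. ln (marg2 J b)"]
    by (simp add: split_log entropy_def xlnx_def)
  show "entropy J \<le> entropy (marg1 J) + entropy (marg2 J)"
    using gibbs(1)[OF J T abs_cont] cross by simp
  show "J = ?T" if "entropy J = entropy (marg1 J) + entropy (marg2 J)"
    using gibbs(2)[OF J T abs_cont] cross that by simp
qed

definition mean :: "('a::finite \<Rightarrow> real) \<Rightarrow> ('a \<Rightarrow> real) \<Rightarrow> real" where
  "mean p f = (\<Sum>y\<in>UNIV. p y * f y)"

definition var :: "('a::finite \<Rightarrow> real) \<Rightarrow> ('a \<Rightarrow> real) \<Rightarrow> real" where
  "var p f = (\<Sum>y\<in>UNIV. p y * (f y - mean p f)\<^sup>2)"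

lemma var_cong: "(\<And>y. p y \<noteq> 0 \<Longrightarrow> f y = g y) \<Longrightarrow> var p f = var p g"
proof -
  assume eq: "\<And>y. p y \<noteq> 0 \<Longrightarrow> f y = g y"
  have "mean p f = mean p g" unfolding mean_def by (rule sum.cong) (use eq in force)+
  thus "var p f = var p g" unfolding var_def by (intro sum.cong) (use eq in force)+
qed

lemma var_eq:
  assumes "is_distr p" shows "var p f = mean p (\<lambda>y. (f y)\<^sup>2) - (mean p f)\<^sup>2"
proof -
  have "var p f = mean p (\<lambda>y. (f y)\<^sup>2) - 2 * mean p f * mean p f + (\<Sum>y\<in>UNIV. p y * (mean p f)\<^sup>2)"
    unfolding var_def mean_def
    by (simp add: power2_diff algebra_simps sum.distrib sum_subtractf sum_distrib_left)
  thus ?thesis using distr_sum[OF assms] by (simp add: power2_eq_square sum_distrib_right[symmetric])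
qed

lemma var_nonneg: "is_distr p \<Longrightarrow> 0 \<le> var p f"
  unfolding var_def by (intro sum_nonneg mult_nonneg_nonneg) (auto simp: distr_nonneg)

lemma mean_pprod_mult:
  "mean (pprod p q) (\<lambda>z. f (fst z) * g (snd z)) = mean p f * mean q g"
  by (simp add: mean_def pprod_def sum_UNIV_prod sum_product algebra_simps)

lemma var_pprod_add:
  assumes p: "is_distr p" and q: "is_distr q"
  shows "var (pprod p q) (\<lambda>z. f (fst z) + g (snd z)) = var p f + var q g"
proof -
  have mean_fst: "mean (pprod p q) (\<lambda>z. h (fst z)) = mean p h" for h
    using mean_pprod_mult[of p q h "\<lambda>_. 1"] distr_sum[OF q] by (simp add: mean_def)
  have mean_snd: "mean (pprod p q) (\<lambda>z. h (snd z)) = mean q h" for h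
    using mean_pprod_mult[of p q "\<lambda>_. 1" h] distr_sum[OF p] by (simp add: mean_def)
  have mean_add: "mean (pprod p q) (\<lambda>z. u z + v z) = mean (pprod p q) u + mean (pprod p q) v"
    for u v by (simp add: mean_def algebra_simps sum.distrib)
  have mean_scale: "mean (pprod p q) (\<lambda>z. c * u z) = c * mean (pprod p q) u" for u c
    by (simp add: mean_def algebra_simps sum_distrib_left)
  have square: "(f (fst z) + g (snd z))\<^sup>2
      = (f (fst z))\<^sup>2 + (2 * (f (fst z) * g (snd z)) + (g (snd z))\<^sup>2)" for z
    by (simp add: power2_sum)
  show ?thesis
    unfolding var_eq[OF pprod_distr[OF p q]] var_eq[OF p] var_eq[OF q] square
    using mean_fst[of "\<lambda>y. (f y)\<^sup>2"] mean_snd[of "\<lambda>y. (g y)\<^sup>2"] mean_fst[of f] mean_snd[of g]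
    by (simp add: mean_add mean_scale mean_pprod_mult power2_sum)
qed

section \<open>The product channel\<close>

lemma prod_channel_row: "prod_channel W W' z = pprod (W (fst z)) (W' (snd z))"
  by (simp add: prod_channel_def pprod_def fun_eq_iff split_def)

lemma prod_channel_is_channel:
  assumes "is_channel W" "is_channel W'" shows "is_channel (prod_channel W W')"
  unfolding is_channel_def
  using pprod_distr[OF channel_distr[OF assms(1)] channel_distr[OF assms(2)]]
  by (simp add: prod_channel_row)

lemma marg_out_distr_prod:
  assumes "is_channel W" "is_channel W'"
  shows "marg1 (out_distr (prod_channel W W') R) = out_distr W (marg1 R)"
    and "marg2 (out_distr (prod_channel W W') R) = out_distr W' (marg2 R)"
proof -
  have out: "out_distr (prod_channel W W') R (y, y')
        = (\<Sum>x\<in>UNIV. \<Sum>x'\<in>UNIV. R (x, x') * (W x y * W' x' y'))" for y y'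
    by (simp add: out_distr_def sum_UNIV_prod prod_channel_def)
  have "(\<Sum>y'\<in>UNIV. out_distr (prod_channel W W') R (y, y')) = out_distr W (marg1 R) y" for y
  proof -
    have "(\<Sum>y'\<in>UNIV. out_distr (prod_channel W W') R (y, y'))
        = (\<Sum>x\<in>UNIV. \<Sum>x'\<in>UNIV. \<Sum>y'\<in>UNIV. R (x, x') * (W x y * W' x' y'))"
      unfolding out by (subst sum.swap, subst (2) sum.swap, rule refl)
    also have "\<dots> = (\<Sum>x\<in>UNIV. \<Sum>x'\<in>UNIV. R (x, x') * W x y)"
      by (simp add: sum_distrib_left[symmetric] mult.assoc channel_sum[OF assms(2)])
    finally show ?thesis by (simp add: out_distr_def marg1_def sum_distrib_right)
  qed
  thus "marg1 (out_distr (prod_channel W W') R) = out_distr W (marg1 R)"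
    by (simp add: marg1_def fun_eq_iff)
  have "(\<Sum>y\<in>UNIV. R (x, x') * (W x y * W' x' y')) = R (x, x') * W' x' y'" for x x' y'
    using channel_sum[OF assms(1), of x]
    by (simp add: sum_distrib_left[symmetric] sum_distrib_right[symmetric] algebra_simps)
  hence "(\<Sum>y\<in>UNIV. out_distr (prod_channel W W') R (y, y')) = out_distr W' (marg2 R) y'" for y'
    unfolding out
    by (subst sum.swap, subst (2) sum.swap, subst sum.swap)
       (simp add: out_distr_def marg2_def sum_distrib_right)
  thus "marg2 (out_distr (prod_channel W W') R) = out_distr W' (marg2 R)"
    by (simp add: marg2_def fun_eq_iff)
qed

lemma out_distr_prod_pprod:
  "out_distr (prod_channel W W') (pprod P P') = pprod (out_distr W P) (out_distr W' P')"
  by (simp add: fun_eq_iff out_distr_def pprod_def prod_channel_def sum_UNIV_prod sum_product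
      algebra_simps)

lemma mutual_info_prod_channel:
  fixes W :: "'x::finite \<Rightarrow> 'y::finite \<Rightarrow> real" and W' :: "'x'::finite \<Rightarrow> 'y'::finite \<Rightarrow> real"
  assumes R: "is_distr R" and ch: "is_channel W" "is_channel W'"
  defines "Q \<equiv> out_distr (prod_channel W W') R"
  shows "mutual_info R (prod_channel W W')
    = mutual_info (marg1 R) W + mutual_info (marg2 R) W'
      - (entropy (marg1 Q) + entropy (marg2 Q) - entropy Q)"
proof -
  have "(\<Sum>z\<in>UNIV. R z * entropy (prod_channel W W' z))
      = (\<Sum>z\<in>UNIV. R z * (entropy (W (fst z)) + entropy (W' (snd z))))"
    using entropy_pprod[OF channel_distr[OF ch(1)] channel_distr[OF ch(2)]]
    by (simp add: prod_channel_row)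
  also have "\<dots> = (\<Sum>x\<in>UNIV. marg1 R x * entropy (W x)) + (\<Sum>x'\<in>UNIV. marg2 R x' * entropy (W' x'))"
    by (rule sum_split_marginals)
  finally show ?thesis
    unfolding Q_def marg_out_distr_prod[OF ch]
      mutual_info_entropy[OF R prod_channel_is_channel[OF ch]]
      mutual_info_entropy[OF marg1_distr[OF R] ch(1)] mutual_info_entropy[OF marg2_distr[OF R] ch(2)]
    by simp
qed

lemma mutual_info_prod_channel_le:
  assumes R: "is_distr R" and ch: "is_channel W" "is_channel W'"
  shows "mutual_info R (prod_channel W W') \<le> mutual_info (marg1 R) W + mutual_info (marg2 R) W'"
    and "mutual_info R (prod_channel W W') = mutual_info (marg1 R) W + mutual_info (marg2 R) W'
      \<Longrightarrow> out_distr (prod_channel W W') R = pprod (out_distr W (marg1 R)) (out_distr W' (marg2 R))"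
  using mutual_info_prod_channel[OF R ch]
    entropy_subadditive[OF out_distr_distr[OF R prod_channel_is_channel[OF ch]]]
  by (auto simp: marg_out_distr_prod[OF ch])

lemma mutual_info_prod_channel_pprod:
  assumes P: "is_distr P" "is_distr P'" and ch: "is_channel W" "is_channel W'"
  shows "mutual_info (pprod P P') (prod_channel W W') = mutual_info P W + mutual_info P' W'"
  using mutual_info_prod_channel[OF pprod_distr[OF P] ch]
    entropy_pprod[OF out_distr_distr[OF P(1) ch(1)] out_distr_distr[OF P(2) ch(2)]]
  by (simp add: marg1_pprod[OF P(2)] marg2_pprod[OF P(1)] out_distr_prod_pprod
      marg1_pprod[OF out_distr_distr[OF P(2) ch(2)]] marg2_pprod[OF out_distr_distr[OF P(1) ch(1)]])

lemma capacity_prod_channel: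
  assumes ch: "is_channel W" "is_channel W'"
  shows "capacity (prod_channel W W') = capacity W + capacity W'"
proof (rule antisym)
  obtain R where R: "R \<in> optimal_inputs (prod_channel W W')"
    using capacity_achieved[OF prod_channel_is_channel[OF ch]] by blast
  hence "is_distr R" by (simp add: optimal_inputs_def)
  thus "capacity (prod_channel W W') \<le> capacity W + capacity W'"
    using R mutual_info_prod_channel_le(1)[OF _ ch]
      mutual_info_le_capacity[OF ch(1) marg1_distr] mutual_info_le_capacity[OF ch(2) marg2_distr]
    by (fastforce simp: optimal_inputs_def)
next
  obtain P P' where "P \<in> optimal_inputs W" "P' \<in> optimal_inputs W'"
    using capacity_achieved[OF ch(1)] capacity_achieved[OF ch(2)] by blast
  thus "capacity W + capacity W' \<le> capacity (prod_channel W W')"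
    using mutual_info_prod_channel_pprod[OF _ _ ch, of P P']
      mutual_info_le_capacity[OF prod_channel_is_channel[OF ch] pprod_distr, of P P']
    by (simp add: optimal_inputs_def)
qed

lemma optimal_inputs_prod_channel:
  assumes ch: "is_channel W" "is_channel W'" and R: "R \<in> optimal_inputs (prod_channel W W')"
  shows "marg1 R \<in> optimal_inputs W" and "marg2 R \<in> optimal_inputs W'"
    and "out_distr (prod_channel W W') R = pprod (out_distr W (marg1 R)) (out_distr W' (marg2 R))"
proof -
  have Rd: "is_distr R" and Rmi: "mutual_info R (prod_channel W W') = capacity W + capacity W'"
    using R capacity_prod_channel[OF ch] by (auto simp: optimal_inputs_def)
  have "mutual_info (marg1 R) W \<le> capacity W" "mutual_info (marg2 R) W' \<le> capacity W'"
    by (intro mutual_info_le_capacity ch marg1_distr marg2_distr Rd)+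
  hence opt: "mutual_info (marg1 R) W = capacity W" "mutual_info (marg2 R) W' = capacity W'"
    using mutual_info_prod_channel_le(1)[OF Rd ch] Rmi by linarith+
  thus "marg1 R \<in> optimal_inputs W" "marg2 R \<in> optimal_inputs W'"
    using marg1_distr[OF Rd] marg2_distr[OF Rd] by (simp_all add: optimal_inputs_def)
  show "out_distr (prod_channel W W') R = pprod (out_distr W (marg1 R)) (out_distr W' (marg2 R))"
    using mutual_info_prod_channel_le(2)[OF Rd ch] opt Rmi by simp
qed

lemma pprod_optimal_input:
  assumes ch: "is_channel W" "is_channel W'"
    and "P \<in> optimal_inputs W" "P' \<in> optimal_inputs W'"
  shows "pprod P P' \<in> optimal_inputs (prod_channel W W')"
  using assms mutual_info_prod_channel_pprod[OF _ _ ch, of P P'] capacity_prod_channel[OF ch]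
    pprod_distr[of P P']
  by (simp add: optimal_inputs_def)

section \<open>Dispersion\<close>

lemma dispersion_var:
  "dispersion P W = (\<Sum>x\<in>UNIV. P x * var (W x) (\<lambda>y. ln (W x y / out_distr W P y)))"
  unfolding dispersion_def var_def mean_def rel_ent_eq by (auto intro!: sum.cong)

text \<open>If the output of the product channel factorises, then on the support of every row the
  information density of the product channel is the sum of the two information densities;
  since a row is a product distribution, the variances add, and so do the dispersions.\<close>
lemma dispersion_prod_channel:
  assumes R: "is_distr R" and ch: "is_channel W" "is_channel W'"
    and factor: "out_distr (prod_channel W W') R
                  = pprod (out_distr W (marg1 R)) (out_distr W' (marg2 R))"
  shows "dispersion R (prod_channel W W') = dispersion (marg1 R) W + dispersion (marg2 R) W'"
proof -
  let ?Q1 = "out_distr W (marg1 R)" and ?Q2 = "out_distr W' (marg2 R)"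
  define v1 where "v1 x = var (W x) (\<lambda>y. ln (W x y / ?Q1 y))" for x
  define v2 where "v2 x' = var (W' x') (\<lambda>y'. ln (W' x' y' / ?Q2 y'))" for x'
  have row: "var (prod_channel W W' z) (\<lambda>w. ln (prod_channel W W' z w
               / out_distr (prod_channel W W') R w)) = v1 (fst z) + v2 (snd z)"
    if "R z \<noteq> 0" for z
  proof -
    obtain x x' where z: "z = (x, x')" by (cases z)
    have "marg1 R x \<noteq> 0" "marg2 R x' \<noteq> 0"
      using that le_marg[OF R, of x x'] distr_nonneg[OF R, of z] z by auto
    hence Q_pos: "W x y \<noteq> 0 \<Longrightarrow> ?Q1 y \<noteq> 0" "W' x' y' \<noteq> 0 \<Longrightarrow> ?Q2 y' \<noteq> 0" for y y'
      using out_distr_pos[OF marg1_distr[OF R] ch(1)] out_distr_pos[OF marg2_distr[OF R] ch(2)]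
      by fastforce+
    have density: "ln (pprod (W x) (W' x') w / pprod ?Q1 ?Q2 w)
        = ln (W x (fst w) / ?Q1 (fst w)) + ln (W' x' (snd w) / ?Q2 (snd w))"
      if "pprod (W x) (W' x') w \<noteq> 0" for w
    proof -
      have split: "pprod (W x) (W' x') w / pprod ?Q1 ?Q2 w
          = (W x (fst w) / ?Q1 (fst w)) * (W' x' (snd w) / ?Q2 (snd w))"
        by (simp add: pprod_def)
      have "W x (fst w) / ?Q1 (fst w) \<noteq> 0" "W' x' (snd w) / ?Q2 (snd w) \<noteq> 0"
        using that Q_pos by (auto simp: pprod_def)
      thus ?thesis unfolding split ln_mult by simp
    qed
    show ?thesis
      unfolding z prod_channel_row factor fst_conv snd_conv v1_def v2_def
      by (subst var_cong[OF density])
         (simp_all add: var_pprod_add[OF channel_distr[OF ch(1)] channel_distr[OF ch(2)],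
           where f="\<lambda>y. ln (W x y / ?Q1 y)" and g="\<lambda>y'. ln (W' x' y' / ?Q2 y')"])
  qed
  have "dispersion R (prod_channel W W') = (\<Sum>z\<in>UNIV. R z * (v1 (fst z) + v2 (snd z)))"
    unfolding dispersion_var by (intro sum.cong refl) (metis mult_zero_left row)
  also have "\<dots> = (\<Sum>x\<in>UNIV. marg1 R x * v1 x) + (\<Sum>x'\<in>UNIV. marg2 R x' * v2 x')"
    by (rule sum_split_marginals)
  also have "\<dots> = dispersion (marg1 R) W + dispersion (marg2 R) W'"
    unfolding dispersion_var v1_def v2_def ..
  finally show ?thesis .
qed

text \<open>The function t (ln t)^2 is bounded by 4 on ]0,1] (its maximum is 4/e^2).\<close>
lemma t_ln_sq_le:
  fixes t :: real assumes "0 < t" "t \<le> 1" shows "t * (ln t)\<^sup>2 \<le> 4"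
proof -
  define s where "s = sqrt t"
  have s: "0 < s" "s \<le> 1" "t = s * s" using assms by (auto simp: s_def)
  have "- ln s = ln (1 / s)" using s by (simp add: ln_div)
  also have "\<dots> \<le> 1 / s - 1" using s by (intro ln_le_minus_one) simp
  finally have "(- ln s)\<^sup>2 \<le> (1 / s)\<^sup>2" using s by (intro power_mono) auto
  hence "s * s * (ln s)\<^sup>2 \<le> 1" using s by (simp add: power2_eq_square field_simps)
  moreover have "t * (ln t)\<^sup>2 = 4 * (s * s * (ln s)\<^sup>2)"
    using s by (simp add: ln_mult_pos power2_eq_square algebra_simps)
  ultimately show ?thesis by simp
qed

text \<open>A single summand of the dispersion is uniformly bounded: from p w \<le> q \<le> 1 we get
  ln w \<le> ln (w/q) \<le> -ln p, and t (ln t)^2 \<le> 4 on ]0,1].\<close>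
lemma density_sq_bound:
  fixes p w q :: real
  assumes p: "0 < p" "p \<le> 1" and w: "0 < w" "w \<le> 1" and q: "p * w \<le> q" "q \<le> 1"
  shows "p * (w * (ln (w / q))\<^sup>2) \<le> 8"
proof -
  have "0 < q" using p w q by (meson mult_pos_pos less_le_trans)
  hence L: "ln (w / q) = ln w - ln q" using w by (simp add: ln_divide_pos)
  have "ln (p * w) \<le> ln q" using p w q \<open>0 < q\<close> by simp
  hence upper: "ln (w / q) \<le> - ln p" using L p w by (simp add: ln_mult_pos)
  have lower: "ln w \<le> ln (w / q)" using L q \<open>0 < q\<close> by simp
  have "(ln (w / q))\<^sup>2 \<le> (ln w)\<^sup>2 + (ln p)\<^sup>2"
  proof (cases "0 \<le> ln (w / q)")
    case True
    hence "(ln (w / q))\<^sup>2 \<le> (- ln p)\<^sup>2" using upper by (intro power_mono) auto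
    thus ?thesis by (simp add: add_increasing)
  next
    case False
    hence "(- ln (w / q))\<^sup>2 \<le> (- ln w)\<^sup>2" using lower by (intro power_mono) auto
    thus ?thesis by (simp add: add_increasing2)
  qed
  hence "p * (w * (ln (w / q))\<^sup>2) \<le> p * (w * ((ln w)\<^sup>2 + (ln p)\<^sup>2))"
    using p w by (intro mult_left_mono) auto
  also have "\<dots> = p * (w * (ln w)\<^sup>2) + w * (p * (ln p)\<^sup>2)"
    by (simp add: algebra_simps)
  also have "\<dots> \<le> 1 * 4 + 1 * 4"
    using t_ln_sq_le[OF w] t_ln_sq_le[OF p] p w by (intro add_mono mult_mono) auto
  finally show ?thesis by simp
qed

lemma dispersion_nonneg: "is_distr P \<Longrightarrow> is_channel W \<Longrightarrow> 0 \<le> dispersion P W"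
  unfolding dispersion_var
  by (intro sum_nonneg mult_nonneg_nonneg var_nonneg channel_distr) (auto simp: distr_nonneg)

lemma dispersion_le:
  fixes W :: "'x::finite \<Rightarrow> 'y::finite \<Rightarrow> real"
  assumes P: "is_distr P" and ch: "is_channel W"
  shows "dispersion P W \<le> 8 * real CARD('x) * real CARD('y)"
proof -
  let ?Q = "out_distr W P"
  have summand: "P x * (W x y * (ln (W x y / ?Q y))\<^sup>2) \<le> 8" for x y
  proof (cases "P x = 0 \<or> W x y = 0")
    case False
    thus ?thesis
      using distr_nonneg[OF P, of x] distr_le_1[OF P, of x] channel_nonneg[OF ch, of x y]
        distr_le_1[OF channel_distr[OF ch], of x y] out_distr_ge[OF P ch, of x y]
        distr_le_1[OF out_distr_distr[OF P ch], of y]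
      by (intro density_sq_bound) auto
  qed auto
  have "dispersion P W \<le> (\<Sum>x\<in>UNIV. P x * mean (W x) (\<lambda>y. (ln (W x y / ?Q y))\<^sup>2))"
    unfolding dispersion_var var_eq[OF channel_distr[OF ch]]
    by (intro sum_mono mult_left_mono distr_nonneg[OF P]) simp
  also have "\<dots> = (\<Sum>x\<in>UNIV. \<Sum>y\<in>UNIV. P x * (W x y * (ln (W x y / ?Q y))\<^sup>2))"
    by (simp add: mean_def sum_distrib_left)
  also have "\<dots> \<le> (\<Sum>x\<in>(UNIV::'x set). \<Sum>y\<in>(UNIV::'y set). 8)"
    by (intro sum_mono summand)
  finally show ?thesis by simp
qed

lemma Sup_image_sum:
  fixes f :: "'a \<Rightarrow> real" and g :: "'b \<Rightarrow> real"
  assumes A: "A \<noteq> {}" and B: "B \<noteq> {}" and bf: "bdd_above (f ` A)" and bg: "bdd_above (g ` B)"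
  shows "Sup ((\<lambda>(a, b). f a + g b) ` (A \<times> B)) = Sup (f ` A) + Sup (g ` B)"
proof -
  let ?S = "Sup ((\<lambda>(a, b). f a + g b) ` (A \<times> B))"
  have upper: "f a + g b \<le> Sup (f ` A) + Sup (g ` B)" if "a \<in> A" "b \<in> B" for a b
    using cSUP_upper[OF that(1) bf] cSUP_upper[OF that(2) bg] by simp
  hence bdd: "bdd_above ((\<lambda>(a, b). f a + g b) ` (A \<times> B))" by (auto intro!: bdd_aboveI)
  have "Sup (g ` B) \<le> ?S - Sup (f ` A)"
  proof (rule cSUP_least[OF B])
    fix b assume "b \<in> B"
    have "Sup (f ` A) \<le> ?S - g b"
    proof (rule cSUP_least[OF A])
      fix a assume "a \<in> A"
      hence "f a + g b \<le> ?S" using \<open>b \<in> B\<close> bdd by (intro cSup_upper) auto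
      thus "f a \<le> ?S - g b" by simp
    qed
    thus "g b \<le> ?S - Sup (f ` A)" by simp
  qed
  moreover have "?S \<le> Sup (f ` A) + Sup (g ` B)" using A B upper by (intro cSup_least) auto
  ultimately show ?thesis by simp
qed

lemma Inf_image_sum:
  fixes f :: "'a \<Rightarrow> real" and g :: "'b \<Rightarrow> real"
  assumes A: "A \<noteq> {}" and B: "B \<noteq> {}" and bf: "bdd_below (f ` A)" and bg: "bdd_below (g ` B)"
  shows "Inf ((\<lambda>(a, b). f a + g b) ` (A \<times> B)) = Inf (f ` A) + Inf (g ` B)"
proof -
  have "bdd_above (uminus ` f ` A)" "bdd_above (uminus ` g ` B)"
    using bf bg by (simp_all only: bdd_above_uminus)
  hence "Sup ((\<lambda>(a, b). - f a + - g b) ` (A \<times> B)) = Sup (uminus ` f ` A) + Sup (uminus ` g ` B)"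
    using Sup_image_sum[OF A B, of "\<lambda>a. - f a" "\<lambda>b. - g b"] by (simp add: image_image)
  moreover have "uminus ` (\<lambda>(a, b). f a + g b) ` (A \<times> B) = (\<lambda>(a, b). - f a + - g b) ` (A \<times> B)"
    by (auto simp: image_image case_prod_beta)
  ultimately show ?thesis by (simp add: Inf_real_def)
qed

section \<open>Dispersions of the capacity-achieving inputs\<close>

text \<open>The set of dispersions of capacity-achieving inputs of the product channel consists
  exactly of the sums of dispersions of capacity-achieving inputs of the factors: the
  marginals of an optimal input realise its dispersion, and product inputs realise every sum.\<close>
lemma dispersions_prod_channel:
  assumes ch: "is_channel W" "is_channel W'"
  shows "(\<lambda>R. dispersion R (prod_channel W W')) ` optimal_inputs (prod_channel W W')
    = (\<lambda>(P, P'). dispersion P W + dispersion P' W') ` (optimal_inputs W \<times> optimal_inputs W')"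
proof (intro equalityI subsetI)
  fix v assume "v \<in> (\<lambda>R. dispersion R (prod_channel W W')) ` optimal_inputs (prod_channel W W')"
  then obtain R where R: "R \<in> optimal_inputs (prod_channel W W')"
    and v: "v = dispersion R (prod_channel W W')" by blast
  have "v = dispersion (marg1 R) W + dispersion (marg2 R) W'"
    using v R dispersion_prod_channel[OF _ ch optimal_inputs_prod_channel(3)[OF ch R]]
    by (simp add: optimal_inputs_def)
  thus "v \<in> (\<lambda>(P, P'). dispersion P W + dispersion P' W') ` (optimal_inputs W \<times> optimal_inputs W')"
    using optimal_inputs_prod_channel(1,2)[OF ch R] by force
next
  fix v assume "v \<in> (\<lambda>(P, P'). dispersion P W + dispersion P' W') ` (optimal_inputs W \<times> optimal_inputs W')"
  then obtain P P' where P: "P \<in> optimal_inputs W" "P' \<in> optimal_inputs W'"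
    and v: "v = dispersion P W + dispersion P' W'" by auto
  hence Pd: "is_distr P" "is_distr P'" by (auto simp: optimal_inputs_def)
  have R: "pprod P P' \<in> optimal_inputs (prod_channel W W')"
    by (rule pprod_optimal_input[OF ch P])
  have "dispersion (pprod P P') (prod_channel W W') = v"
    using dispersion_prod_channel[OF pprod_distr[OF Pd] ch optimal_inputs_prod_channel(3)[OF ch R]] v
    by (simp add: marg1_pprod[OF Pd(2)] marg2_pprod[OF Pd(1)])
  thus "v \<in> (\<lambda>R. dispersion R (prod_channel W W')) ` optimal_inputs (prod_channel W W')"
    using R by force
qed

lemma dispersions_bounded:
  fixes W :: "'x::finite \<Rightarrow> 'y::finite \<Rightarrow> real"
  assumes "is_channel W"
  shows "bdd_above ((\<lambda>P. dispersion P W) ` optimal_inputs W)"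
    and "bdd_below ((\<lambda>P. dispersion P W) ` optimal_inputs W)"
  using dispersion_le[OF _ assms] dispersion_nonneg[OF _ assms]
  by (auto simp: optimal_inputs_def intro!: bdd_aboveI bdd_belowI)

theorem lemma3:
  fixes W :: "'x::finite \<Rightarrow> 'y::finite \<Rightarrow> real"
    and W' :: "'x'::finite \<Rightarrow> 'y'::finite \<Rightarrow> real"
  assumes "is_channel W" and "is_channel W'"
  shows "Vplus (prod_channel W W') = Vplus W + Vplus W'
    \<and> Vminus (prod_channel W W') = Vminus W + Vminus W'"
  unfolding Vplus_def Vminus_def dispersions_prod_channel[OF assms]
  using Sup_image_sum[OF capacity_achieved[OF assms(1)] capacity_achieved[OF assms(2)]
      dispersions_bounded(1)[OF assms(1)] dispersions_bounded(1)[OF assms(2)]]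
    Inf_image_sum[OF capacity_achieved[OF assms(1)] capacity_achieved[OF assms(2)]
      dispersions_bounded(2)[OF assms(1)] dispersions_bounded(2)[OF assms(2)]]
  by simp
end
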